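(* Let $G$ and $G'$ be graphs. If there exists a chordal graph $F$ of treewidth at most $2$ such that the number of homomorphisms from $F$ to $G$ differs from the number of homomorphisms from $F$ to $G'$, then $G$ and $G'$ are distinguishable by EB-1WL.
   Context: All graphs are finite, simple and undirected; the graphs $G,G'$ have no isolated vertices; $N(v)$ denotes the neighborhood of $v$. A homomorphism from $F=(V_F,E_F)$ to $G=(V,E)$ is a map $h:V_F\to V$ with $\{h(a),h(b)\}\in E$ for every $\{a,b\}\in E_F$. A graph is chordal if it has no induced cycle of length $\ge4$. An ordered edge of $G=(V,E)$ is a pair $(u,v)$ with $\{u,v\}\in E$. EB-1WL coloring: $\mathrm{eb}^{(0)}(G,(u,v))=1$ for every ordered edge, and $\mathrm{eb}^{(\ell+1)}(G,(u,v)) = \big(\mathrm{eb}^{(\ell)}(G,(u,v)),\ \{\!\{\mathrm{eb}^{(\ell)}(G,(u,x)) : x\in N(u)\}\!\},\ \{\!\{(\mathrm{eb}^{(\ell)}(G,(u,y)),\mathrm{eb}^{(\ell)}(G,(v,y))) : y\in N(u)\cap N(v)\}\!\},\ \{\!\{\mathrm{eb}^{(\ell)}(G,(v,z)) : z\in N(v)\}\!\}\big)$. $\mathrm{eb}^{(\ell)}(G)$ is the multiset of $\mathrm{eb}^{(\ell)}(G,(u,v))$ over all ordered edges. Graphs are distinguishable by EB-1WL if they have different numbers of vertices or there is $\ell$ with $\mathrm{eb}^{(\ell)}(G)\neq\mathrm{eb}^{(\ell)}(G')$. Colors are nested tuples/multisets, comparable across graphs. *)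

theory Defs
  imports Main "HOL-Library.Multiset" "HOL-Library.FuncSet"
begin

definition is_graph :: "'a set \<Rightarrow> 'a set set \<Rightarrow> bool" where
  "is_graph V E \<longleftrightarrow> finite V \<and>
     (\<forall>e\<in>E. \<exists>u v. e = {u, v} \<and> u \<noteq> v \<and> u \<in> V \<and> v \<in> V)"

definition no_isolated :: "'a set \<Rightarrow> 'a set set \<Rightarrow> bool" where
  "no_isolated V E \<longleftrightarrow> (\<forall>v\<in>V. \<exists>u. {u, v} \<in> E)"

definition nbhd :: "'a set set \<Rightarrow> 'a \<Rightarrow> 'a set" where
  "nbhd E u = {v. {u, v} \<in> E}"

definition is_hom :: "'c set set \<Rightarrow> 'a set set \<Rightarrow> ('c \<Rightarrow> 'a) \<Rightarrow> bool" where
  "is_hom EF E h \<longleftrightarrow> (\<forall>a b. {a, b} \<in> EF \<longrightarrow> {h a, h b} \<in> E)"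

text \<open>Maps are taken extensional (undefined outside V_F) so that they are exactly the
  maps V_F \<rightarrow> V.\<close>
definition hom_count :: "'c set \<Rightarrow> 'c set set \<Rightarrow> 'a set \<Rightarrow> 'a set set \<Rightarrow> nat" where
  "hom_count VF EF V E = card {h \<in> VF \<rightarrow>\<^sub>E V. is_hom EF E h}"

definition is_cycle :: "'a set \<Rightarrow> 'a set set \<Rightarrow> 'a list \<Rightarrow> bool" where
  "is_cycle V E vs \<longleftrightarrow> length vs \<ge> 3 \<and> distinct vs \<and> set vs \<subseteq> V \<and>
     (\<forall>i < length vs. {vs ! i, vs ! ((i + 1) mod length vs)} \<in> E)"

definition is_induced_cycle :: "'a set \<Rightarrow> 'a set set \<Rightarrow> 'a list \<Rightarrow> bool" where
  "is_induced_cycle V E vs \<longleftrightarrow> is_cycle V E vs \<and>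
     (\<forall>i < length vs. \<forall>j < length vs. {vs ! i, vs ! j} \<in> E \<longrightarrow>
        j = (i + 1) mod length vs \<or> i = (j + 1) mod length vs)"

definition chordal :: "'a set \<Rightarrow> 'a set set \<Rightarrow> bool" where
  "chordal V E \<longleftrightarrow> \<not> (\<exists>vs. length vs \<ge> 4 \<and> is_induced_cycle V E vs)"

definition connected_in :: "'a set set \<Rightarrow> 'a set \<Rightarrow> bool" where
  "connected_in E S \<longleftrightarrow>
     (\<forall>u\<in>S. \<forall>v\<in>S. (\<lambda>x y. x \<in> S \<and> y \<in> S \<and> {x, y} \<in> E)\<^sup>*\<^sup>* u v)"

definition is_tree :: "'t set \<Rightarrow> 't set set \<Rightarrow> bool" where
  "is_tree VT ET \<longleftrightarrow> is_graph VT ET \<and> VT \<noteq> {} \<and> connected_in ET VT \<and>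
     \<not> (\<exists>vs. is_cycle VT ET vs)"

definition is_tree_decomposition ::
  "'c set \<Rightarrow> 'c set set \<Rightarrow> nat set \<Rightarrow> nat set set \<Rightarrow> (nat \<Rightarrow> 'c set) \<Rightarrow> bool" where
  "is_tree_decomposition VF EF VT ET bag \<longleftrightarrow>
     is_tree VT ET \<and>
     (\<forall>t\<in>VT. bag t \<subseteq> VF) \<and>
     (\<Union>t\<in>VT. bag t) = VF \<and>
     (\<forall>e\<in>EF. \<exists>t\<in>VT. e \<subseteq> bag t) \<and>
     (\<forall>v\<in>VF. connected_in ET {t \<in> VT. v \<in> bag t})"

definition decomposition_width :: "nat set \<Rightarrow> (nat \<Rightarrow> 'c set) \<Rightarrow> nat" where
  "decomposition_width VT bag = Max ((\<lambda>t. card (bag t)) ` VT) - 1"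

definition treewidth :: "'c set \<Rightarrow> 'c set set \<Rightarrow> nat" where
  "treewidth VF EF = (LEAST k. \<exists>VT ET bag.
      is_tree_decomposition VF EF VT ET bag \<and> decomposition_width VT bag = k)"

datatype color = Base
  | Node color "color multiset" "(color \<times> color) multiset" "color multiset"

fun ebc :: "nat \<Rightarrow> 'a set set \<Rightarrow> 'a \<times> 'a \<Rightarrow> color" where
  "ebc 0 E uv = Base"
| "ebc (Suc l) E (u, v) =
     Node (ebc l E (u, v))
          (image_mset (\<lambda>x. ebc l E (u, x)) (mset_set (nbhd E u)))
          (image_mset (\<lambda>y. (ebc l E (u, y), ebc l E (v, y))) (mset_set (nbhd E u \<inter> nbhd E v)))
          (image_mset (\<lambda>z. ebc l E (v, z)) (mset_set (nbhd E v)))"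

definition ordered_edges :: "'a set set \<Rightarrow> ('a \<times> 'a) set" where
  "ordered_edges E = {(u, v). {u, v} \<in> E}"

definition eb_multiset :: "nat \<Rightarrow> 'a set set \<Rightarrow> color multiset" where
  "eb_multiset l E = image_mset (ebc l E) (mset_set (ordered_edges E))"

definition eb_distinguishable :: "'a set \<Rightarrow> 'a set set \<Rightarrow> 'b set \<Rightarrow> 'b set set \<Rightarrow> bool" where
  "eb_distinguishable V E V' E' \<longleftrightarrow>
     card V \<noteq> card V' \<or> (\<exists>l. eb_multiset l E \<noteq> eb_multiset l E')"

end

(* Weight every homomorphism h from F to G by a product of vertex weights, each a function of the
   multiset of EB-1WL colours (of some level l) of the ordered edges leaving an image vertex h x,
   and of edge weights, each a function of the colour of an image edge (h x, h y). Removing a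
   vertex w of F that is simplicial of degree at most two and summing over its image turns such a
   weighted count on F into one on F - w whose weights are again of this form, read off one level
   higher (w a leaf at x: a new weight at x from the colours of the edges leaving h x) or two
   levels higher (w adjacent to adjacent x, y: a new weight on (x, y) from the common-neighbour
   part of the colour of (h x, h y)); an isolated w contributes the sum of a vertex weight over G,
   which the edge-colour histogram determines. Hence, if F can be dismantled this way, the
   weighted counts and in particular the plain homomorphism count are determined by the EB-1WL
   histograms of G. Dirac's argument shows that every nonempty chordal graph of treewidth at most
   two has such a vertex: a vertex whose neighbourhood lies in a leaf bag of a width-2 tree
   decomposition has at most two neighbours, and if these are non-adjacent, contracting the vertex
   onto an edge between them preserves chordality and the width. *)

theory Submission
  imports Defs Complex_Main
begin

abbreviation edges_del :: "'a set set \<Rightarrow> 'a \<Rightarrow> 'a set set" where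
  "edges_del E w \<equiv> {e \<in> E. w \<notin> e}"

lemma is_graph_edgeE:
  assumes "is_graph V E" "e \<in> E"
  obtains u v where "e = {u, v}" "u \<noteq> v" "u \<in> V" "v \<in> V"
  using assms unfolding is_graph_def by blast

lemma is_graph_edgeD:
  assumes "is_graph V E" "{a, b} \<in> E"
  shows "a \<noteq> b" "a \<in> V" "b \<in> V"
  using is_graph_edgeE[OF assms] by (metis doubleton_eq_iff)+

lemma is_graph_finite: "is_graph V E \<Longrightarrow> finite V"
  unfolding is_graph_def by simp

lemma is_graph_singleton_notin: "is_graph V E \<Longrightarrow> {x} \<notin> E"
  using is_graph_edgeD(1)[of V E x x] by auto

lemma ordered_edges_eq_Sigma: "is_graph V E \<Longrightarrow> ordered_edges E = Sigma V (nbhd E)"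
  unfolding ordered_edges_def nbhd_def using is_graph_edgeD by fastforce

lemma nbhd_subset: "is_graph V E \<Longrightarrow> nbhd E u \<subseteq> V"
  unfolding nbhd_def using is_graph_edgeD by fastforce

lemma finite_nbhd: "is_graph V E \<Longrightarrow> finite (nbhd E u)"
  using nbhd_subset is_graph_finite by (rule finite_subset)

lemma finite_ordered_edges: "is_graph V E \<Longrightarrow> finite (ordered_edges E)"
  by (simp add: ordered_edges_eq_Sigma is_graph_finite finite_nbhd)

lemma nbhd_irrefl: "is_graph V E \<Longrightarrow> u \<notin> nbhd E u"
  unfolding nbhd_def using is_graph_singleton_notin by fastforce

lemma nbhd_sym: "u \<in> nbhd E v \<longleftrightarrow> v \<in> nbhd E u"
  unfolding nbhd_def by (simp add: insert_commute)

lemma nbhd_nonempty: "no_isolated V E \<Longrightarrow> u \<in> V \<Longrightarrow> nbhd E u \<noteq> {}"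
  unfolding no_isolated_def nbhd_def by (fastforce simp: insert_commute)

lemma is_graph_edges_del: "is_graph V E \<Longrightarrow> is_graph (V - {w}) (edges_del E w)"
  unfolding is_graph_def by blast

lemma is_graph_insert_edge:
  "is_graph V E \<Longrightarrow> x \<in> V \<Longrightarrow> y \<in> V \<Longrightarrow> x \<noteq> y \<Longrightarrow> is_graph V (insert {x, y} E)"
  unfolding is_graph_def by blast

section \<open>EB-1WL colours\<close>

fun color_prev :: "color \<Rightarrow> color" where
  "color_prev Base = Base"
| "color_prev (Node a b c d) = a"

fun color_src :: "color \<Rightarrow> color multiset" where
  "color_src Base = {#}"
| "color_src (Node a b c d) = b"

fun color_common :: "color \<Rightarrow> (color \<times> color) multiset" where
  "color_common Base = {#}"
| "color_common (Node a b c d) = c"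

fun color_tgt :: "color \<Rightarrow> color multiset" where
  "color_tgt Base = {#}"
| "color_tgt (Node a b c d) = d"

fun color_swap :: "color \<Rightarrow> color" where
  "color_swap Base = Base"
| "color_swap (Node a b c d) = Node (color_swap a) d (image_mset prod.swap c) b"

definition vertex_color :: "nat \<Rightarrow> 'a set set \<Rightarrow> 'a \<Rightarrow> color multiset" where
  "vertex_color l E u = image_mset (\<lambda>z. ebc l E (u, z)) (mset_set (nbhd E u))"

lemma ebc_eq_color_prev: "ebc l E p = color_prev (ebc (Suc l) E p)"
  by (cases p) simp

lemma vertex_color_eq_color_prev: "vertex_color l E u = image_mset color_prev (vertex_color (Suc l) E u)"
  unfolding vertex_color_def by (simp add: multiset.map_comp o_def)

lemma ebc_swap: "ebc l E (v, u) = color_swap (ebc l E (u, v))"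
proof (induction l arbitrary: u v)
  case 0
  show ?case by simp
next
  case (Suc l)
  have "image_mset prod.swap (image_mset (\<lambda>y. (ebc l E (u, y), ebc l E (v, y))) (mset_set (nbhd E u \<inter> nbhd E v)))
     = image_mset (\<lambda>y. (ebc l E (v, y), ebc l E (u, y))) (mset_set (nbhd E v \<inter> nbhd E u))"
    by (simp add: multiset.map_comp o_def Int_commute)
  then show ?case
    by (simp only: ebc.simps color_swap.simps Suc[of v u])
qed

text \<open>Each ordered edge \<open>(u, v)\<close> records the vertex colour of \<open>u\<close> one level below, and \<open>u\<close> is the
  source of exactly \<open>card (nbhd E u) > 0\<close> ordered edges.\<close>
lemma sum_vertex_color_eq_sum_eb_multiset:
  assumes g: "is_graph V E" and ni: "no_isolated V E"
  shows "real (\<Sum>z\<in>V. f (vertex_color l E z)) =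
    (\<Sum>c\<in># eb_multiset (Suc l) E. real (f (color_src c)) / real (size (color_src c)))"
proof -
  let ?g = "\<lambda>u. real (f (vertex_color l E u)) / real (card (nbhd E u))"
  have "(\<Sum>c\<in># eb_multiset (Suc l) E. real (f (color_src c)) / real (size (color_src c)))
     = (\<Sum>p\<in>ordered_edges E. real (f (color_src (ebc (Suc l) E p))) / real (size (color_src (ebc (Suc l) E p))))"
    unfolding eb_multiset_def by (simp add: sum_unfold_sum_mset multiset.map_comp o_def)
  also have "\<dots> = (\<Sum>p\<in>Sigma V (nbhd E). ?g (fst p))"
    unfolding ordered_edges_eq_Sigma[OF g]
    by (rule sum.cong[OF refl]) (auto simp: vertex_color_def split: prod.splits)
  also have "\<dots> = (\<Sum>u\<in>V. \<Sum>v\<in>nbhd E u. ?g u)"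
    using sum.Sigma[OF is_graph_finite[OF g], of "nbhd E" "\<lambda>u v. ?g u"] finite_nbhd[OF g]
    by (simp add: split_def)
  also have "\<dots> = (\<Sum>u\<in>V. real (f (vertex_color l E u)))"
    using nbhd_nonempty[OF ni] finite_nbhd[OF g] by (intro sum.cong) auto
  finally show ?thesis by simp
qed

lemma sum_vertex_color_eq:
  fixes f :: "color multiset \<Rightarrow> nat"
  assumes "is_graph V E" "no_isolated V E" "is_graph V' E'" "no_isolated V' E'"
    and "eb_multiset (Suc l) E = eb_multiset (Suc l) E'"
  shows "(\<Sum>z\<in>V. f (vertex_color l E z)) = (\<Sum>z\<in>V'. f (vertex_color l E' z))"
proof -
  have "real (\<Sum>z\<in>V. f (vertex_color l E z)) = real (\<Sum>z\<in>V'. f (vertex_color l E' z))"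
    using sum_vertex_color_eq_sum_eb_multiset[OF assms(1,2)]
      sum_vertex_color_eq_sum_eb_multiset[OF assms(3,4)] assms(5) by simp
  then show ?thesis by (rule of_nat_eq_iff[THEN iffD1])
qed

section \<open>Weighted homomorphism counts\<close>

definition homs :: "'c set \<Rightarrow> 'c set set \<Rightarrow> 'a set \<Rightarrow> 'a set set \<Rightarrow> ('c \<Rightarrow> 'a) set" where
  "homs VF EF V E = {h \<in> VF \<rightarrow>\<^sub>E V. is_hom EF E h}"

definition hom_weight :: "nat \<Rightarrow> 'a set set \<Rightarrow> 'c set \<Rightarrow> 'c set set \<Rightarrow>
    ('c \<Rightarrow> color multiset \<Rightarrow> nat) \<Rightarrow> ('c \<Rightarrow> 'c \<Rightarrow> color \<Rightarrow> nat) \<Rightarrow> ('c \<Rightarrow> 'a) \<Rightarrow> nat" where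
  "hom_weight l E VF EF \<alpha> \<beta> h = (\<Prod>x\<in>VF. \<alpha> x (vertex_color l E (h x))) *
     (\<Prod>p\<in>ordered_edges EF. \<beta> (fst p) (snd p) (ebc l E (h (fst p), h (snd p))))"

definition weighted_hom_count :: "nat \<Rightarrow> 'a set \<Rightarrow> 'a set set \<Rightarrow> 'c set \<Rightarrow> 'c set set \<Rightarrow>
    ('c \<Rightarrow> color multiset \<Rightarrow> nat) \<Rightarrow> ('c \<Rightarrow> 'c \<Rightarrow> color \<Rightarrow> nat) \<Rightarrow> nat" where
  "weighted_hom_count l V E VF EF \<alpha> \<beta> = (\<Sum>h\<in>homs VF EF V E. hom_weight l E VF EF \<alpha> \<beta> h)"

definition extension_weight :: "nat \<Rightarrow> 'a set \<Rightarrow> 'a set set \<Rightarrow>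
    ('c \<Rightarrow> color multiset \<Rightarrow> nat) \<Rightarrow> ('c \<Rightarrow> 'c \<Rightarrow> color \<Rightarrow> nat) \<Rightarrow> 'c \<Rightarrow> 'c set \<Rightarrow> ('c \<Rightarrow> 'a) \<Rightarrow> nat" where
  "extension_weight l V E \<alpha> \<beta> w N h = (\<Sum>z | z \<in> V \<and> (\<forall>x\<in>N. {h x, z} \<in> E).
      \<alpha> w (vertex_color l E z) * (\<Prod>x\<in>N. \<beta> w x (ebc l E (z, h x)) * \<beta> x w (ebc l E (h x, z))))"

lemma hom_count_eq_weighted_hom_count:
  "hom_count VF EF V E = weighted_hom_count l V E VF EF (\<lambda>_ _. 1) (\<lambda>_ _ _. 1)"
  unfolding weighted_hom_count_def hom_count_def hom_weight_def homs_def by simp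

lemma hom_weight_Suc:
  "hom_weight l E VF EF \<alpha> \<beta> h =
   hom_weight (Suc l) E VF EF (\<lambda>x m. \<alpha> x (image_mset color_prev m)) (\<lambda>x y c. \<beta> x y (color_prev c)) h"
  unfolding hom_weight_def by (simp add: vertex_color_eq_color_prev[symmetric] ebc_eq_color_prev[symmetric])

lemma finite_homs: "finite V \<Longrightarrow> finite VF \<Longrightarrow> finite (homs VF EF V E)"
  unfolding homs_def by (rule finite_subset[OF _ finite_PiE]) auto

lemma weighted_hom_count_empty:
  assumes "is_graph {} EF"
  shows "weighted_hom_count l V E {} EF \<alpha> \<beta> = 1"
proof -
  have no_edges: "EF = {}" using assms unfolding is_graph_def by auto
  have only_hom: "homs {} {} V E = {\<lambda>_. undefined}" unfolding homs_def is_hom_def by simp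
  show ?thesis
    unfolding weighted_hom_count_def hom_weight_def no_edges only_hom by (simp add: ordered_edges_def)
qed

lemma homs_eq_image_fun_upd:
  assumes gF: "is_graph VF EF" and w: "w \<in> VF"
  shows "homs VF EF V E = (\<lambda>(h, z). h(w := z)) ` Sigma (homs (VF - {w}) (edges_del EF w) V E)
            (\<lambda>h. {z \<in> V. \<forall>x\<in>nbhd EF w. {h x, z} \<in> E})"
    (is "_ = _ ` Sigma ?H ?C")
proof (intro set_eqI iffI)
  fix g assume g: "g \<in> homs VF EF V E"
  have "g(w := undefined) \<in> ?H"
    using g unfolding homs_def is_hom_def PiE_def extensional_def by auto
  moreover have "g w \<in> ?C (g(w := undefined))"
    using g w is_graph_edgeD(1)[OF gF] unfolding homs_def is_hom_def nbhd_def
    by (fastforce simp: insert_commute)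
  ultimately show "g \<in> (\<lambda>(h, z). h(w := z)) ` Sigma ?H ?C"
    by (intro image_eqI[of _ _ "(g(w := undefined), g w)"]) auto
next
  fix g assume "g \<in> (\<lambda>(h, z). h(w := z)) ` Sigma ?H ?C"
  then obtain h z where g: "g = h(w := z)" and h: "h \<in> ?H" and z: "z \<in> ?C h" by auto
  have "{g a, g b} \<in> E" if ab: "{a, b} \<in> EF" for a b
  proof -
    have "a \<noteq> b" using is_graph_edgeD(1)[OF gF ab] .
    moreover have "a = w \<Longrightarrow> b \<in> nbhd EF w" "b = w \<Longrightarrow> a \<in> nbhd EF w"
      using ab unfolding nbhd_def by (auto simp: insert_commute)
    moreover have "a \<noteq> w \<Longrightarrow> b \<noteq> w \<Longrightarrow> {h a, h b} \<in> E"
      using h ab unfolding homs_def is_hom_def by blast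
    ultimately show ?thesis
      using z unfolding g by (cases "a = w"; cases "b = w") (auto simp: insert_commute)
  qed
  moreover have "g \<in> VF \<rightarrow>\<^sub>E V"
    using h z w unfolding g homs_def PiE_def extensional_def by auto
  ultimately show "g \<in> homs VF EF V E" unfolding homs_def is_hom_def by blast
qed

lemma inj_on_fun_upd_homs: "inj_on (\<lambda>(h, z). h(w := z)) (Sigma (homs (VF - {w}) EF V E) C)"
proof (rule inj_onI, clarsimp)
  fix h z h' z'
  assume "h \<in> homs (VF - {w}) EF V E" "h' \<in> homs (VF - {w}) EF V E" and eq: "h(w := z) = h'(w := z')"
  then have "h w = h' w" unfolding homs_def PiE_def extensional_def by auto
  then show "h = h' \<and> z = z'"
    using fun_cong[OF eq] by (metis fun_upd_apply ext)
qed

lemma ordered_edges_split: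
  assumes "is_graph VF EF"
  shows "ordered_edges EF = ordered_edges (edges_del EF w) \<union>
     ((\<lambda>x. (w, x)) ` nbhd EF w \<union> (\<lambda>x. (x, w)) ` nbhd EF w)"
  unfolding ordered_edges_def nbhd_def using is_graph_edgeD[OF assms]
  by (auto simp: insert_commute)

lemma hom_weight_fun_upd:
  assumes gF: "is_graph VF EF" and w: "w \<in> VF"
  shows "hom_weight l E VF EF \<alpha> \<beta> (h(w := z)) = hom_weight l E (VF - {w}) (edges_del EF w) \<alpha> \<beta> h *
     (\<alpha> w (vertex_color l E z) * (\<Prod>x\<in>nbhd EF w. \<beta> w x (ebc l E (z, h x)) * \<beta> x w (ebc l E (h x, z))))"
proof -
  let ?N = "nbhd EF w"
  let ?f = "\<lambda>p. \<beta> (fst p) (snd p) (ebc l E ((h(w := z)) (fst p), (h(w := z)) (snd p)))"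
  have wN: "w \<notin> ?N" using nbhd_irrefl[OF gF] .
  have fin: "finite (ordered_edges (edges_del EF w))" "finite ?N"
    using finite_ordered_edges[OF is_graph_edges_del[OF gF]] finite_nbhd[OF gF] .
  have vertices: "(\<Prod>x\<in>VF. \<alpha> x (vertex_color l E ((h(w := z)) x)))
      = \<alpha> w (vertex_color l E z) * (\<Prod>x\<in>VF - {w}. \<alpha> x (vertex_color l E (h x)))"
    using prod.remove[OF is_graph_finite[OF gF] w, of "\<lambda>x. \<alpha> x (vertex_color l E ((h(w := z)) x))"]
    by simp
  have "(\<Prod>p\<in>ordered_edges EF. ?f p) = (\<Prod>p\<in>ordered_edges (edges_del EF w). ?f p) *
      ((\<Prod>p\<in>(\<lambda>x. (w, x)) ` ?N. ?f p) * (\<Prod>p\<in>(\<lambda>x. (x, w)) ` ?N. ?f p))"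
    unfolding ordered_edges_split[OF gF, of w] using fin wN
    by (subst prod.union_disjoint, auto simp: ordered_edges_def intro: prod.union_disjoint)
  also have "(\<Prod>p\<in>ordered_edges (edges_del EF w). ?f p) =
      (\<Prod>p\<in>ordered_edges (edges_del EF w). \<beta> (fst p) (snd p) (ebc l E (h (fst p), h (snd p))))"
    by (rule prod.cong) (auto simp: ordered_edges_def)
  also have "(\<Prod>p\<in>(\<lambda>x. (w, x)) ` ?N. ?f p) = (\<Prod>x\<in>?N. \<beta> w x (ebc l E (z, h x)))"
    using wN by (subst prod.reindex) (auto intro!: prod.cong simp: inj_on_def)
  also have "(\<Prod>p\<in>(\<lambda>x. (x, w)) ` ?N. ?f p) = (\<Prod>x\<in>?N. \<beta> x w (ebc l E (h x, z)))"
    using wN by (subst prod.reindex) (auto intro!: prod.cong simp: inj_on_def)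
  finally show ?thesis
    unfolding hom_weight_def vertices by (simp add: prod.distrib ac_simps)
qed

lemma weighted_hom_count_remove_vertex:
  assumes gF: "is_graph VF EF" and w: "w \<in> VF" and gG: "is_graph V E"
  shows "weighted_hom_count l V E VF EF \<alpha> \<beta> =
    (\<Sum>h\<in>homs (VF - {w}) (edges_del EF w) V E. hom_weight l E (VF - {w}) (edges_del EF w) \<alpha> \<beta> h *
      extension_weight l V E \<alpha> \<beta> w (nbhd EF w) h)"
proof -
  let ?H = "homs (VF - {w}) (edges_del EF w) V E"
  let ?C = "\<lambda>h. {z \<in> V. \<forall>x\<in>nbhd EF w. {h x, z} \<in> E}"
  have fin: "finite V" "finite ?H"
    using is_graph_finite[OF gG] is_graph_finite[OF gF] by (auto intro: finite_homs)
  have "weighted_hom_count l V E VF EF \<alpha> \<beta> = (\<Sum>(h, z)\<in>Sigma ?H ?C. hom_weight l E VF EF \<alpha> \<beta> (h(w := z)))"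
    unfolding weighted_hom_count_def homs_eq_image_fun_upd[OF gF w]
    by (subst sum.reindex[OF inj_on_fun_upd_homs]) (simp add: case_prod_unfold)
  also have "\<dots> = (\<Sum>h\<in>?H. \<Sum>z\<in>?C h. hom_weight l E VF EF \<alpha> \<beta> (h(w := z)))"
    using fin by (subst sum.Sigma) auto
  finally show ?thesis
    unfolding extension_weight_def by (simp add: hom_weight_fun_upd[OF gF w] sum_distrib_left)
qed

lemma hom_weight_vertex_factor:
  assumes "finite VF" "x \<in> VF"
  shows "hom_weight l E VF EF (\<lambda>y m. \<alpha> y m * (if y = x then g m else 1)) \<beta> h =
    hom_weight l E VF EF \<alpha> \<beta> h * g (vertex_color l E (h x))"
  using assms unfolding hom_weight_def by (simp add: prod.distrib ac_simps)

lemma hom_weight_edge_factor: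
  assumes "finite (ordered_edges EF)" "(x, y) \<in> ordered_edges EF"
  shows "hom_weight l E VF EF \<alpha> (\<lambda>a b c. \<beta> a b c * (if a = x \<and> b = y then g c else 1)) h
     = hom_weight l E VF EF \<alpha> \<beta> h * g (ebc l E (h x, h y))"
proof -
  have "(\<Prod>p\<in>ordered_edges EF. if fst p = x \<and> snd p = y then g (ebc l E (h (fst p), h (snd p))) else 1)
      = (\<Prod>p\<in>ordered_edges EF. if p = (x, y) then g (ebc l E (h x, h y)) else 1)"
    by (rule prod.cong) auto
  also have "\<dots> = g (ebc l E (h x, h y))" using assms by (simp add: prod.delta)
  finally show ?thesis
    unfolding hom_weight_def by (simp add: prod.distrib ac_simps)
qed

text \<open>The weights left behind when a leaf hanging at \<open>x\<close>, or a vertex adjacent to the two adjacent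
  vertices \<open>x, y\<close>, is summed out: they only depend on the colour of \<open>x\<close> one level higher, resp. on
  the common-neighbour part of the colour of \<open>(x, y)\<close> two levels higher.\<close>

definition leaf_weight :: "('c \<Rightarrow> color multiset \<Rightarrow> nat) \<Rightarrow> ('c \<Rightarrow> 'c \<Rightarrow> color \<Rightarrow> nat) \<Rightarrow>
    'c \<Rightarrow> 'c \<Rightarrow> color multiset \<Rightarrow> nat" where
  "leaf_weight \<alpha> \<beta> w x m =
     (\<Sum>c\<in>#m. \<alpha> w (color_tgt c) * (\<beta> w x (color_swap (color_prev c)) * \<beta> x w (color_prev c)))"

definition triangle_weight :: "('c \<Rightarrow> color multiset \<Rightarrow> nat) \<Rightarrow> ('c \<Rightarrow> 'c \<Rightarrow> color \<Rightarrow> nat) \<Rightarrow>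
    'c \<Rightarrow> 'c \<Rightarrow> 'c \<Rightarrow> color \<Rightarrow> nat" where
  "triangle_weight \<alpha> \<beta> w x y c = (\<Sum>p\<in># color_common c.
     \<alpha> w (color_tgt (fst p)) * (\<beta> w x (color_swap (color_prev (fst p))) * \<beta> x w (color_prev (fst p)))
       * (\<beta> w y (color_swap (color_prev (snd p))) * \<beta> y w (color_prev (snd p))))"

lemma extension_weight_leaf:
  assumes "is_graph V E"
  shows "extension_weight l V E \<alpha> \<beta> w {x} h = leaf_weight \<alpha> \<beta> w x (vertex_color (Suc l) E (h x))"
proof -
  have "{z \<in> V. \<forall>x'\<in>{x}. {h x', z} \<in> E} = nbhd E (h x)"
    using nbhd_subset[OF assms] unfolding nbhd_def by auto
  then show ?thesis
    unfolding extension_weight_def leaf_weight_def vertex_color_def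
    by (simp add: sum_unfold_sum_mset multiset.map_comp o_def ebc_swap[symmetric] vertex_color_def)
qed

lemma extension_weight_triangle:
  assumes "is_graph V E" "x \<noteq> y"
  shows "extension_weight l V E \<alpha> \<beta> w {x, y} h =
    triangle_weight \<alpha> \<beta> w x y (ebc (Suc (Suc l)) E (h x, h y))"
proof -
  have "{z \<in> V. \<forall>x'\<in>{x, y}. {h x', z} \<in> E} = nbhd E (h x) \<inter> nbhd E (h y)"
    using nbhd_subset[OF assms(1)] unfolding nbhd_def by auto
  then show ?thesis
    unfolding extension_weight_def triangle_weight_def using assms(2)
    by (simp add: sum_unfold_sum_mset multiset.map_comp o_def ebc_swap[symmetric] vertex_color_def
        ac_simps)
qed

lemma weighted_hom_count_remove_isolated:
  assumes "is_graph VF EF" "w \<in> VF" "is_graph V E" "nbhd EF w = {}"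
  shows "weighted_hom_count l V E VF EF \<alpha> \<beta> =
    weighted_hom_count l V E (VF - {w}) (edges_del EF w) \<alpha> \<beta> * (\<Sum>z\<in>V. \<alpha> w (vertex_color l E z))"
  unfolding weighted_hom_count_remove_vertex[OF assms(1-3)] assms(4)
  by (simp add: weighted_hom_count_def extension_weight_def sum_distrib_right)

lemma weighted_hom_count_remove_leaf:
  assumes gF: "is_graph VF EF" and w: "w \<in> VF" and gG: "is_graph V E" and N: "nbhd EF w = {x}"
  shows "weighted_hom_count l V E VF EF \<alpha> \<beta> =
    weighted_hom_count (Suc l) V E (VF - {w}) (edges_del EF w)
      (\<lambda>y m. \<alpha> y (image_mset color_prev m) * (if y = x then leaf_weight \<alpha> \<beta> w x m else 1))
      (\<lambda>a b c. \<beta> a b (color_prev c))"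
proof -
  have x: "x \<in> VF - {w}" using N nbhd_subset[OF gF] nbhd_irrefl[OF gF] by blast
  show ?thesis
    unfolding weighted_hom_count_remove_vertex[OF gF w gG] N extension_weight_leaf[OF gG]
    unfolding weighted_hom_count_def
    by (intro sum.cong refl, subst hom_weight_vertex_factor[OF _ x])
      (use is_graph_finite[OF gF] in \<open>simp_all add: hom_weight_Suc[symmetric]\<close>)
qed

lemma weighted_hom_count_remove_simplicial:
  assumes gF: "is_graph VF EF" and w: "w \<in> VF" and gG: "is_graph V E" and N: "nbhd EF w = {x, y}"
    and xy: "x \<noteq> y" and exy: "{x, y} \<in> EF"
  shows "weighted_hom_count l V E VF EF \<alpha> \<beta> =
    weighted_hom_count (Suc (Suc l)) V E (VF - {w}) (edges_del EF w)
      (\<lambda>a m. \<alpha> a (image_mset color_prev (image_mset color_prev m)))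
      (\<lambda>a b c. \<beta> a b (color_prev (color_prev c)) * (if a = x \<and> b = y then triangle_weight \<alpha> \<beta> w x y c else 1))"
proof -
  have "x \<noteq> w" "y \<noteq> w" using N nbhd_irrefl[OF gF] by blast+
  then have xy_edge: "(x, y) \<in> ordered_edges (edges_del EF w)"
    using exy unfolding ordered_edges_def by simp
  have lift2: "hom_weight l E VF' EF' \<alpha> \<beta> h = hom_weight (Suc (Suc l)) E VF' EF'
      (\<lambda>a m. \<alpha> a (image_mset color_prev (image_mset color_prev m))) (\<lambda>a b c. \<beta> a b (color_prev (color_prev c))) h"
    for VF' EF' h
    by (subst hom_weight_Suc, subst hom_weight_Suc) (rule refl)
  show ?thesis
    unfolding weighted_hom_count_remove_vertex[OF gF w gG] N extension_weight_triangle[OF gG xy]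
    unfolding weighted_hom_count_def
    by (intro sum.cong refl, subst hom_weight_edge_factor[OF _ xy_edge])
      (use finite_ordered_edges[OF is_graph_edges_del[OF gF]] in \<open>simp_all add: lift2\<close>)
qed

section \<open>Trees and tree decompositions\<close>

lemma first_repetition:
  fixes f :: "nat \<Rightarrow> 'a"
  assumes "\<not> inj f"
  obtains i j where "i < j" "f i = f j" "inj_on f {..<j}"
proof -
  obtain a b where "a \<noteq> b" "f a = f b" using assms unfolding inj_def by blast
  then have ex: "\<exists>j. \<exists>i<j. f i = f j" by (metis linorder_neqE_nat)
  define j where "j = (LEAST j. \<exists>i<j. f i = f j)"
  obtain i where "i < j" "f i = f j" using LeastI_ex[OF ex] unfolding j_def by blast
  moreover have "inj_on f {..<j}"
  proof (rule inj_onI, rule ccontr)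
    have no_rep: "\<not> (\<exists>i<b. f i = f b)" if "b < j" for b
      using not_less_Least[of b] that unfolding j_def by blast
    fix a b assume "a \<in> {..<j}" "b \<in> {..<j}" "f a = f b" "a \<noteq> b"
    then show False using no_rep by (metis lessThan_iff linorder_neqE_nat)
  qed
  ultimately show thesis by (rule that)
qed

text \<open>The cycle is the stretch of the walk between the first repeated vertex and its earlier
  occurrence; that it has length at least three is where non-backtracking is needed.\<close>
lemma nonbacktracking_walk_has_cycle:
  assumes g: "is_graph V E" and walk: "\<And>k. {f k, f (Suc k)} \<in> E"
    and nonback: "\<And>k. f (Suc (Suc k)) \<noteq> f k"
  shows "\<exists>vs. is_cycle V E vs"
proof -
  have fV: "f k \<in> V" for k using is_graph_edgeD(2)[OF g walk] .
  have "\<not> inj f"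
  proof
    assume "inj f"
    moreover have "finite (range f)"
      using fV is_graph_finite[OF g] by (metis finite_subset image_subsetI)
    ultimately show False by (simp add: finite_image_iff)
  qed
  then obtain i j where ij: "i < j" "f i = f j" and inj: "inj_on f {..<j}"
    by (rule first_repetition)
  define vs where "vs = map f [i..<j]"
  have len: "length vs = j - i" unfolding vs_def by simp
  have "j \<noteq> Suc i" using is_graph_edgeD(1)[OF g walk[of i]] ij by auto
  moreover have "j \<noteq> Suc (Suc i)" using nonback[of i] ij by auto
  ultimately have len3: "3 \<le> length vs" using ij(1) len by linarith
  have "distinct vs"
    unfolding vs_def by (auto simp: distinct_map intro: inj_on_subset[OF inj])
  moreover have "{vs ! k, vs ! ((k + 1) mod length vs)} \<in> E" if "k < length vs" for k
  proof (cases "k + 1 < length vs")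
    case True
    then show ?thesis using walk[of "i + k"] len unfolding vs_def by simp
  next
    case False
    then have "k + 1 = length vs" using that by simp
    then have "(k + 1) mod length vs = 0" "Suc (i + k) = j" using len ij by auto
    then show ?thesis using walk[of "i + k"] ij that len unfolding vs_def by simp
  qed
  moreover have "set vs \<subseteq> V" unfolding vs_def using fV by auto
  ultimately show ?thesis using len3 unfolding is_cycle_def by blast
qed

definition leaf :: "'t set set \<Rightarrow> 't \<Rightarrow> bool" where
  "leaf ET t \<longleftrightarrow> (\<forall>u w. {t, u} \<in> ET \<longrightarrow> {t, w} \<in> ET \<longrightarrow> u = w)"

lemma tree_has_leaf:
  assumes tr: "is_tree VT ET"
  shows "\<exists>t\<in>VT. leaf ET t"
proof (rule ccontr)
  assume "\<not> ?thesis"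
  then have branch: "\<exists>u. {t, u} \<in> ET \<and> u \<noteq> p" if "t \<in> VT" for t p
    using that unfolding leaf_def by metis
  have g: "is_graph VT ET" and "VT \<noteq> {}" using tr unfolding is_tree_def by simp_all
  then obtain t0 where t0: "t0 \<in> VT" by blast
  define next_step where "next_step = (\<lambda>(p, t). (t, SOME u. {t, u} \<in> ET \<and> u \<noteq> p))"
  obtain t1 where t1: "{t0, t1} \<in> ET" using branch[OF t0] by blast
  define f where "f k = fst ((next_step ^^ k) (t0, t1))" for k
  have step: "{fst q, snd q} \<in> ET \<Longrightarrow> {snd q, snd (next_step q)} \<in> ET \<and> snd (next_step q) \<noteq> fst q"
    for q
    using someI_ex[OF branch[OF is_graph_edgeD(3)[OF g]]] unfolding next_step_def
    by (auto split: prod.splits)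
  have edge: "{fst ((next_step ^^ k) (t0, t1)), snd ((next_step ^^ k) (t0, t1))} \<in> ET" for k
    by (induction k) (use t1 step in \<open>auto simp: next_step_def split: prod.splits\<close>)
  have f_Suc: "f (Suc k) = snd ((next_step ^^ k) (t0, t1))" for k
    unfolding f_def by (simp add: next_step_def split: prod.splits)
  have "{f k, f (Suc k)} \<in> ET" for k using edge[of k] unfolding f_def f_Suc[unfolded f_def] .
  moreover have "f (Suc (Suc k)) \<noteq> f k" for k
    using step[OF edge[of k]] f_Suc[of "Suc k"] unfolding f_def by simp
  ultimately obtain vs where "is_cycle VT ET vs"
    using nonbacktracking_walk_has_cycle[OF g] by blast
  then show False using tr unfolding is_tree_def by blast
qed

lemma connected_in_remove_leaf:
  assumes c: "connected_in ET S" and t: "leaf ET t"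
  shows "connected_in (edges_del ET t) (S - {t})"
  unfolding connected_in_def
proof (intro ballI)
  fix a b assume a: "a \<in> S - {t}" and b: "b \<in> S - {t}"
  let ?R = "\<lambda>x y. x \<in> S \<and> y \<in> S \<and> {x, y} \<in> ET"
  let ?R' = "\<lambda>x y. x \<in> S - {t} \<and> y \<in> S - {t} \<and> {x, y} \<in> edges_del ET t"
  have uniq: "u = w" if "{t, u} \<in> ET" "{t, w} \<in> ET" for u w
    using t that unfolding leaf_def by blast
  text \<open>A path may pass through the leaf \<open>t\<close> only by going back and forth along its unique edge.\<close>
  have "(c \<noteq> t \<longrightarrow> ?R'\<^sup>*\<^sup>* a c) \<and> (c = t \<longrightarrow> (\<exists>s. s \<noteq> t \<and> s \<in> S \<and> {t, s} \<in> ET \<and> ?R'\<^sup>*\<^sup>* a s))"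
    if "?R\<^sup>*\<^sup>* a c" for c
    using that
  proof (induction rule: rtranclp_induct)
    case base
    then show ?case using a by simp
  next
    case (step c d)
    show ?case
    proof (cases "c = t")
      case True
      then obtain s where s: "s \<noteq> t" "s \<in> S" "{t, s} \<in> ET" "?R'\<^sup>*\<^sup>* a s" using step.IH by blast
      have "d \<noteq> t \<Longrightarrow> d = s" using uniq[OF _ s(3), of d] step.hyps(2) True by simp
      then show ?thesis using s by blast
    next
      case False
      then have ac: "?R'\<^sup>*\<^sup>* a c" using step.IH by blast
      show ?thesis
      proof (cases "d = t")
        case True
        then show ?thesis using False ac step.hyps(2) by (auto simp: insert_commute)
      next
        case False
        then have "?R' c d" using step.hyps(2) \<open>c \<noteq> t\<close> by simp
        then show ?thesis using False rtranclp.rtrancl_into_rtrancl[OF ac] by blast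
      qed
    qed
  qed
  then show "?R'\<^sup>*\<^sup>* a b" using c a b unfolding connected_in_def by blast
qed

lemma is_tree_remove_leaf:
  assumes tr: "is_tree VT ET" and t: "leaf ET t" "VT \<noteq> {t}"
  shows "is_tree (VT - {t}) (edges_del ET t)"
  unfolding is_tree_def
proof (intro conjI)
  show "is_graph (VT - {t}) (edges_del ET t)"
    using tr unfolding is_tree_def by (simp add: is_graph_edges_del)
  show "VT - {t} \<noteq> {}" using t(2) tr unfolding is_tree_def by blast
  show "connected_in (edges_del ET t) (VT - {t})"
    using connected_in_remove_leaf[OF _ t(1)] tr unfolding is_tree_def by simp
  show "\<nexists>vs. is_cycle (VT - {t}) (edges_del ET t) vs"
    using tr unfolding is_tree_def is_cycle_def by blast
qed

lemma leaf_bag_subset_nbr_bag: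
  assumes t: "leaf ET t" and covered: "\<forall>v\<in>bag t. \<exists>u. {t, u} \<in> ET \<and> v \<in> bag u"
    and e: "e \<subseteq> bag t" "e \<noteq> {}"
  obtains u where "{t, u} \<in> ET" "e \<subseteq> bag u"
proof -
  obtain a where "a \<in> e" using e(2) by blast
  then obtain u where u: "{t, u} \<in> ET" "a \<in> bag u" using covered e(1) by blast
  have "b \<in> bag u" if "b \<in> e" for b
  proof -
    obtain u' where "{t, u'} \<in> ET" "b \<in> bag u'" using covered e(1) \<open>b \<in> e\<close> by blast
    moreover have "u' = u" using t u(1) \<open>{t, u'} \<in> ET\<close> unfolding leaf_def by blast
    ultimately show ?thesis by simp
  qed
  then show thesis using that u(1) by blast
qed

lemma tree_decomposition_remove_leaf:
  assumes td: "is_tree_decomposition VF EF VT ET bag" and g: "is_graph VF EF"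
    and t: "leaf ET t" "VT \<noteq> {t}" and covered: "\<forall>v\<in>bag t. \<exists>u. {t, u} \<in> ET \<and> v \<in> bag u"
  shows "is_tree_decomposition VF EF (VT - {t}) (edges_del ET t) bag"
proof -
  have tr: "is_tree VT ET" and bags: "\<forall>s\<in>VT. bag s \<subseteq> VF" and cover: "(\<Union>s\<in>VT. bag s) = VF"
    and edges: "\<forall>e\<in>EF. \<exists>s\<in>VT. e \<subseteq> bag s"
    and conn: "\<forall>v\<in>VF. connected_in ET {s \<in> VT. v \<in> bag s}"
    using td unfolding is_tree_decomposition_def by simp_all
  have gT: "is_graph VT ET" using tr unfolding is_tree_def by simp
  have inherit: "\<exists>s\<in>VT - {t}. e \<subseteq> bag s" if se: "s \<in> VT" "e \<subseteq> bag s" "e \<noteq> {}" for s e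
  proof (cases "s = t")
    case True
    then obtain u where "{t, u} \<in> ET" "e \<subseteq> bag u"
      using leaf_bag_subset_nbr_bag[OF t(1) covered] se(2,3) by blast
    then show ?thesis using is_graph_edgeD[OF gT] by blast
  qed (use se in blast)
  have bags': "\<forall>s\<in>VT - {t}. bag s \<subseteq> VF" using bags by blast
  have "VF \<subseteq> (\<Union>s\<in>VT - {t}. bag s)"
  proof
    fix v assume "v \<in> VF"
    then obtain s where "s \<in> VT" "{v} \<subseteq> bag s" using cover by blast
    then show "v \<in> (\<Union>s\<in>VT - {t}. bag s)" using inherit by blast
  qed
  then have cover': "(\<Union>s\<in>VT - {t}. bag s) = VF" using bags' by blast
  have edges': "\<forall>e\<in>EF. \<exists>s\<in>VT - {t}. e \<subseteq> bag s"
    using edges inherit is_graph_edgeE[OF g] by (metis insert_not_empty)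
  have conn': "\<forall>v\<in>VF. connected_in (edges_del ET t) {s \<in> VT - {t}. v \<in> bag s}"
  proof
    fix v assume "v \<in> VF"
    have "{s \<in> VT. v \<in> bag s} - {t} = {s \<in> VT - {t}. v \<in> bag s}" by blast
    then show "connected_in (edges_del ET t) {s \<in> VT - {t}. v \<in> bag s}"
      using connected_in_remove_leaf[OF conn[rule_format, OF \<open>v \<in> VF\<close>] t(1)] by simp
  qed
  show ?thesis
    unfolding is_tree_decomposition_def
    using is_tree_remove_leaf[OF tr t] bags' cover' edges' conn' by (intro conjI)
qed

lemma bag_unique:
  assumes td: "is_tree_decomposition VF EF VT ET bag" and t: "t \<in> VT" "v \<in> bag t"
    and only_t: "\<forall>u. {t, u} \<in> ET \<longrightarrow> v \<notin> bag u" and s: "s \<in> VT" "v \<in> bag s"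
  shows "s = t"
proof (rule ccontr)
  assume "s \<noteq> t"
  have "v \<in> VF" using td t unfolding is_tree_decomposition_def by blast
  then have "connected_in ET {t \<in> VT. v \<in> bag t}" using td unfolding is_tree_decomposition_def by blast
  then have "(\<lambda>x y. x \<in> {t \<in> VT. v \<in> bag t} \<and> y \<in> {t \<in> VT. v \<in> bag t} \<and> {x, y} \<in> ET)\<^sup>*\<^sup>* t s"
    using t s unfolding connected_in_def by blast
  then show False
    by (cases rule: converse_rtranclpE) (use \<open>s \<noteq> t\<close> only_t in auto)
qed

text \<open>If a leaf bag has a vertex occurring in no neighbouring bag, all neighbours of that vertex lie
  in the leaf bag; otherwise the leaf is redundant and can be pruned.\<close>
lemma exists_vertex_nbhd_in_bag:
  assumes "is_tree_decomposition VF EF VT ET bag" "is_graph VF EF" "VF \<noteq> {}"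
  shows "\<exists>v\<in>VF. \<exists>t\<in>VT. v \<in> bag t \<and> nbhd EF v \<subseteq> bag t"
  using assms
proof (induction "card VT" arbitrary: VT ET rule: less_induct)
  case less
  note td = less.prems(1) and g = less.prems(2)
  have tr: "is_tree VT ET" and bags: "\<forall>t\<in>VT. bag t \<subseteq> VF" and cover: "(\<Union>t\<in>VT. bag t) = VF"
    and edges: "\<forall>e\<in>EF. \<exists>t\<in>VT. e \<subseteq> bag t"
    using td unfolding is_tree_decomposition_def by simp_all
  obtain t where t: "t \<in> VT" "leaf ET t" using tree_has_leaf[OF tr] by blast
  show ?case
  proof (cases "\<exists>v\<in>bag t. \<forall>u. {t, u} \<in> ET \<longrightarrow> v \<notin> bag u")
    case True
    then obtain v where v: "v \<in> bag t" "\<forall>u. {t, u} \<in> ET \<longrightarrow> v \<notin> bag u" by blast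
    have "nbhd EF v \<subseteq> bag t"
    proof
      fix u assume "u \<in> nbhd EF v"
      then obtain s where "s \<in> VT" "{v, u} \<subseteq> bag s" using edges unfolding nbhd_def by blast
      then show "u \<in> bag t" using bag_unique[OF td t(1) v, of s] by simp
    qed
    then show ?thesis using bags t v by blast
  next
    case False
    then have covered: "\<forall>v\<in>bag t. \<exists>u. {t, u} \<in> ET \<and> v \<in> bag u" by blast
    show ?thesis
    proof (cases "VT = {t}")
      case True
      then have "bag t = VF" using cover by simp
      then show ?thesis using t(1) nbhd_subset[OF g] less.prems(3) by blast
    next
      case False
      have "card (VT - {t}) < card VT"
        using tr t(1) unfolding is_tree_def by (meson card_Diff1_less is_graph_finite)
      from less.hyps[OF this tree_decomposition_remove_leaf[OF td g t(2) False covered] g less.prems(3)]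
      show ?thesis by blast
    qed
  qed
qed

lemma tree_decomposition_delete_vertex:
  assumes td: "is_tree_decomposition VF EF VT ET bag"
    and edges: "\<forall>e\<in>EF'. \<exists>t\<in>VT. e \<subseteq> bag t - {v}"
  shows "is_tree_decomposition (VF - {v}) EF' VT ET (\<lambda>t. bag t - {v})"
proof -
  have "{t \<in> VT. u \<in> bag t - {v}} = {t \<in> VT. u \<in> bag t}" if "u \<in> VF - {v}" for u
    using that by auto
  then show ?thesis using td edges unfolding is_tree_decomposition_def by auto
qed

lemma card_bags_Diff_le:
  assumes "\<forall>t\<in>VT. card (bag t) \<le> k"
  shows "\<forall>t\<in>VT. card (bag t - {v}) \<le> k"
proof
  fix t assume "t \<in> VT"
  then show "card (bag t - {v}) \<le> k" using assms card_Diff1_le[of "bag t" v] by fastforce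
qed

lemma tree_decomposition_trivial:
  assumes "is_graph VF EF"
  shows "is_tree_decomposition VF EF {0} {} (\<lambda>_. VF)"
proof -
  have "\<not> is_cycle {0 :: nat} {} vs" for vs
    unfolding is_cycle_def by (metis empty_iff length_greater_0_conv list.size(3) not_numeral_le_zero)
  then have "is_tree {0 :: nat} {}"
    unfolding is_tree_def by (simp add: is_graph_def connected_in_def)
  moreover have "\<forall>e\<in>EF. e \<subseteq> VF" using is_graph_edgeE[OF assms] by blast
  ultimately show ?thesis
    unfolding is_tree_decomposition_def by (simp add: connected_in_def)
qed

lemma treewidth_le_imp_bags:
  assumes g: "is_graph VF EF" and tw: "treewidth VF EF \<le> k"
  obtains VT ET bag where "is_tree_decomposition VF EF VT ET bag" "\<forall>t\<in>VT. card (bag t) \<le> Suc k"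
proof -
  let ?P = "\<lambda>k. \<exists>VT ET bag. is_tree_decomposition VF EF VT ET bag \<and> decomposition_width VT bag = k"
  have "?P (decomposition_width {0} (\<lambda>_. VF))" using tree_decomposition_trivial[OF g] by blast
  then have "?P (treewidth VF EF)" unfolding treewidth_def by (rule LeastI)
  then obtain VT ET bag where td: "is_tree_decomposition VF EF VT ET bag"
    and width: "decomposition_width VT bag = treewidth VF EF" by blast
  have "finite VT" using td unfolding is_tree_decomposition_def is_tree_def by (meson is_graph_finite)
  then have "card (bag t) \<le> Max ((\<lambda>t. card (bag t)) ` VT)" if "t \<in> VT" for t
    using that by simp
  then have "card (bag t) \<le> Suc k" if "t \<in> VT" for t
    using that width tw unfolding decomposition_width_def by fastforce
  then show thesis using that td by blast
qed

section \<open>Induced cycles and chordality\<close>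

definition cyclic_adj :: "nat \<Rightarrow> nat \<Rightarrow> nat \<Rightarrow> bool" where
  "cyclic_adj n i j \<longleftrightarrow> j = (i + 1) mod n \<or> i = (j + 1) mod n"

lemma cyclic_adj_commute: "cyclic_adj n i j \<longleftrightarrow> cyclic_adj n j i"
  unfolding cyclic_adj_def by blast

lemma cyclic_adj_less:
  assumes "i < n" "j < n"
  shows "cyclic_adj n i j \<longleftrightarrow>
    j = (if Suc i = n then 0 else Suc i) \<or> i = (if Suc j = n then 0 else Suc j)"
proof -
  have "Suc k mod n = (if Suc k = n then 0 else Suc k)" if "k < n" for k
    using that by simp
  then show ?thesis unfolding cyclic_adj_def using assms by simp
qed

lemma cyclic_adj_Suc:
  assumes "3 \<le> n" "i < n" "j < n"
  shows "cyclic_adj (Suc n) i j \<longleftrightarrow> cyclic_adj n i j \<and> {i, j} \<noteq> {0, n - 1}"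
  using assms by (auto simp: cyclic_adj_less doubleton_eq_iff)

lemma cyclic_adj_Suc_last:
  assumes "i < n"
  shows "cyclic_adj (Suc n) i n \<longleftrightarrow> i = 0 \<or> i = n - 1"
  using assms by (auto simp: cyclic_adj_less)

lemma not_cyclic_adj_self: "2 \<le> n \<Longrightarrow> i < n \<Longrightarrow> \<not> cyclic_adj n i i"
  by (auto simp: cyclic_adj_less)

lemma cyclic_adj_rotate:
  assumes "i < n" "j < n"
  shows "cyclic_adj n ((m + i) mod n) ((m + j) mod n) \<longleftrightarrow> cyclic_adj n i j"
proof -
  have shift: "((m + k) mod n + 1) mod n = (m + (k + 1)) mod n" for k
    by (simp add: mod_add_left_eq add.assoc mod_Suc_eq)
  have cancel: "(m + a) mod n = (m + b) mod n \<longleftrightarrow> a mod n = b mod n" for a b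
    by (simp add: nat_mod_eq_iff)
  show ?thesis
    unfolding cyclic_adj_def shift cancel using assms by simp
qed

lemma is_induced_cycle_iff:
  "is_induced_cycle V E vs \<longleftrightarrow> 3 \<le> length vs \<and> distinct vs \<and> set vs \<subseteq> V \<and>
     (\<forall>i<length vs. \<forall>j<length vs. {vs ! i, vs ! j} \<in> E \<longleftrightarrow> cyclic_adj (length vs) i j)"
    (is "_ \<longleftrightarrow> ?basic \<and> ?adj")
proof -
  let ?n = "length vs"
  have "(\<forall>i<?n. {vs ! i, vs ! ((i + 1) mod ?n)} \<in> E) \<longleftrightarrow>
      (\<forall>i<?n. \<forall>j<?n. cyclic_adj ?n i j \<longrightarrow> {vs ! i, vs ! j} \<in> E)" (is "?cyc \<longleftrightarrow> ?adj_edge")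
    if "3 \<le> ?n"
  proof
    show "?cyc \<Longrightarrow> ?adj_edge" unfolding cyclic_adj_def by (auto simp: insert_commute)
    show "?cyc" if adj_edge: ?adj_edge
    proof (intro allI impI)
      fix i assume "i < ?n"
      moreover have "(i + 1) mod ?n < ?n" using \<open>3 \<le> ?n\<close> by (intro mod_less_divisor) linarith
      ultimately show "{vs ! i, vs ! ((i + 1) mod ?n)} \<in> E"
        using adj_edge unfolding cyclic_adj_def by blast
    qed
  qed
  then show ?thesis
    unfolding is_induced_cycle_def is_cycle_def cyclic_adj_def[symmetric] by blast
qed

lemma is_induced_cycle_transfer:
  assumes "is_induced_cycle V E vs" "set vs \<subseteq> V'"
    and "\<And>i j. i < length vs \<Longrightarrow> j < length vs \<Longrightarrow> {vs ! i, vs ! j} \<in> E' \<longleftrightarrow> {vs ! i, vs ! j} \<in> E"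
  shows "is_induced_cycle V' E' vs"
  using assms by (simp add: is_induced_cycle_iff)

lemma is_induced_cycle_rotate:
  assumes "is_induced_cycle V E vs"
  shows "is_induced_cycle V E (rotate m vs)"
proof -
  let ?n = "length vs"
  have adj: "\<forall>i<?n. \<forall>j<?n. {vs ! i, vs ! j} \<in> E \<longleftrightarrow> cyclic_adj ?n i j"
    using assms unfolding is_induced_cycle_iff by blast
  have "{rotate m vs ! i, rotate m vs ! j} \<in> E \<longleftrightarrow> cyclic_adj ?n i j" if "i < ?n" "j < ?n" for i j
  proof -
    have "0 < ?n" using that(1) by linarith
    then have "(m + i) mod ?n < ?n" "(m + j) mod ?n < ?n" by simp_all
    then show ?thesis
      using adj cyclic_adj_rotate[OF that, of m] that by (simp add: nth_rotate)
  qed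
  then show ?thesis using assms by (simp add: is_induced_cycle_iff)
qed

lemma chordal_edges_del:
  assumes "chordal VF EF"
  shows "chordal (VF - {w}) (edges_del EF w)"
  unfolding chordal_def
proof
  assume "\<exists>vs. 4 \<le> length vs \<and> is_induced_cycle (VF - {w}) (edges_del EF w) vs"
  then obtain vs where vs: "4 \<le> length vs" "is_induced_cycle (VF - {w}) (edges_del EF w) vs" by blast
  then have "w \<notin> set vs" "set vs \<subseteq> VF" by (auto simp: is_induced_cycle_iff)
  then have "is_induced_cycle VF EF vs"
    by (intro is_induced_cycle_transfer[OF vs(2)]) auto
  then show False using assms vs(1) unfolding chordal_def by blast
qed

lemma all_less_Suc4: "(\<forall>i<Suc (Suc (Suc (Suc 0))). P i) \<longleftrightarrow> P 0 \<and> P 1 \<and> P 2 \<and> P 3"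
  by (auto simp: less_Suc_eq eval_nat_numeral)

lemma four_cycle_not_chordal:
  assumes g: "is_graph VF EF" and d: "distinct [a, b, c, d]" and s: "{a, b, c, d} \<subseteq> VF"
    and e: "{a, b} \<in> EF" "{b, c} \<in> EF" "{c, d} \<in> EF" "{d, a} \<in> EF"
    and ne: "{a, c} \<notin> EF" "{b, d} \<notin> EF"
  shows "\<not> chordal VF EF"
proof -
  have "{b, a} \<in> EF" "{c, b} \<in> EF" "{d, c} \<in> EF" "{a, d} \<in> EF" "{c, a} \<notin> EF" "{d, b} \<notin> EF"
    using e ne by (simp_all add: insert_commute)
  then have "is_induced_cycle VF EF [a, b, c, d]"
    using assms is_graph_singleton_notin[OF g]
    unfolding is_induced_cycle_def is_cycle_def by (simp add: all_less_Suc4)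
  then show ?thesis unfolding chordal_def by force
qed

lemma is_induced_cycle_snocI:
  assumes n: "3 \<le> length ws" and dist: "distinct ws" and sub: "set ws \<subseteq> V - {v}"
    and v: "v \<in> V" "{v} \<notin> E"
    and old: "\<And>i j. i < length ws \<Longrightarrow> j < length ws \<Longrightarrow>
      {ws ! i, ws ! j} \<in> E \<longleftrightarrow> cyclic_adj (Suc (length ws)) i j"
    and new: "\<And>i. i < length ws \<Longrightarrow> {v, ws ! i} \<in> E \<longleftrightarrow> cyclic_adj (Suc (length ws)) i (length ws)"
  shows "is_induced_cycle V E (ws @ [v])"
proof -
  let ?n = "length ws"
  have "{(ws @ [v]) ! i, (ws @ [v]) ! j} \<in> E \<longleftrightarrow> cyclic_adj (Suc ?n) i j"
    if ij: "i < Suc ?n" "j < Suc ?n" for i j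
  proof -
    consider "i < ?n" "j < ?n" | "i < ?n" "j = ?n" | "i = ?n" "j < ?n" | "i = ?n" "j = ?n"
      using ij by (metis less_SucE)
    then show ?thesis
    proof cases
      case 1
      then show ?thesis using old by (simp add: nth_append)
    next
      case 2
      then show ?thesis using new by (simp add: nth_append insert_commute)
    next
      case 3
      then show ?thesis using new cyclic_adj_commute by (simp add: nth_append)
    next
      case 4
      then show ?thesis using v(2) not_cyclic_adj_self[of "Suc ?n" ?n] n by simp
    qed
  qed
  then show ?thesis
    using n dist sub v(1) unfolding is_induced_cycle_iff by auto
qed

lemma is_induced_cycle_append_vertex:
  assumes c: "is_induced_cycle (VF - {v}) (insert {a, b} (edges_del EF v)) ws"
    and g: "is_graph VF EF" and v: "v \<in> VF" and N: "nbhd EF v = {a, b}" and nab: "{a, b} \<notin> EF"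
    and ends: "ws ! 0 = b" "ws ! (length ws - 1) = a"
  shows "is_induced_cycle VF EF (ws @ [v])"
proof -
  let ?n = "length ws" and ?E' = "insert {a, b} (edges_del EF v)"
  have n: "3 \<le> ?n" and dist: "distinct ws" and sub: "set ws \<subseteq> VF - {v}"
    and adj: "\<forall>i<?n. \<forall>j<?n. {ws ! i, ws ! j} \<in> ?E' \<longleftrightarrow> cyclic_adj ?n i j"
    using c unfolding is_induced_cycle_iff by auto
  have first: "0 < ?n" and last: "?n - 1 < ?n" using n by auto
  have idx: "ws ! i = a \<longleftrightarrow> i = ?n - 1" "ws ! i = b \<longleftrightarrow> i = 0" if "i < ?n" for i
    using ends nth_eq_iff_index_eq[OF dist that last] nth_eq_iff_index_eq[OF dist that first] by simp_all
  have in_VF: "ws ! i \<noteq> v" "ws ! i \<in> VF" if "i < ?n" for i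
    using sub nth_mem[OF that] by auto
  have old: "{ws ! i, ws ! j} \<in> EF \<longleftrightarrow> cyclic_adj (Suc ?n) i j" if "i < ?n" "j < ?n" for i j
  proof -
    have ab: "{ws ! i, ws ! j} = {a, b} \<longleftrightarrow> {i, j} = {0, ?n - 1}"
      using idx[OF that(1)] idx[OF that(2)] by (auto simp: doubleton_eq_iff)
    have "{ws ! i, ws ! j} \<in> EF \<longleftrightarrow> {ws ! i, ws ! j} \<in> ?E' \<and> {ws ! i, ws ! j} \<noteq> {a, b}"
      using nab in_VF[OF that(1)] in_VF[OF that(2)] by auto
    also have "\<dots> \<longleftrightarrow> cyclic_adj ?n i j \<and> {i, j} \<noteq> {0, ?n - 1}"
      unfolding adj[rule_format, OF that] ab ..
    also have "\<dots> \<longleftrightarrow> cyclic_adj (Suc ?n) i j"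
      using cyclic_adj_Suc[OF n that] by simp
    finally show ?thesis .
  qed
  have new: "{v, ws ! i} \<in> EF \<longleftrightarrow> cyclic_adj (Suc ?n) i ?n" if "i < ?n" for i
  proof -
    have "{v, ws ! i} \<in> EF \<longleftrightarrow> ws ! i \<in> {a, b}" using N unfolding nbhd_def by blast
    then show ?thesis using idx[OF that] cyclic_adj_Suc_last[OF that] by auto
  qed
  show ?thesis
    by (rule is_induced_cycle_snocI[OF n dist sub v is_graph_singleton_notin[OF g] old new])
qed

text \<open>A chordless cycle through the new edge \<open>x y\<close> becomes a longer one through \<open>v\<close>.\<close>
lemma chordal_contract:
  assumes g: "is_graph VF EF" and ch: "chordal VF EF" and v: "v \<in> VF"
    and N: "nbhd EF v = {x, y}" and nxy: "{x, y} \<notin> EF"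
  shows "chordal (VF - {v}) (insert {x, y} (edges_del EF v))"
  unfolding chordal_def
proof
  let ?E' = "insert {x, y} (edges_del EF v)"
  assume "\<exists>vs. 4 \<le> length vs \<and> is_induced_cycle (VF - {v}) ?E' vs"
  then obtain vs where len: "4 \<le> length vs" and c: "is_induced_cycle (VF - {v}) ?E' vs" by blast
  let ?n = "length vs"
  have chordless: "\<not> is_induced_cycle VF EF us" if "4 \<le> length us" for us
    using ch that unfolding chordal_def by blast
  have sub: "set vs \<subseteq> VF - {v}" using c by (simp add: is_induced_cycle_iff)
  show False
  proof (cases "x \<in> set vs \<and> y \<in> set vs")
    case False
    have "{vs ! i, vs ! j} \<in> EF \<longleftrightarrow> {vs ! i, vs ! j} \<in> ?E'" if "i < ?n" "j < ?n" for i j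
      using False sub nth_mem[OF that(1)] nth_mem[OF that(2)] by (auto simp: doubleton_eq_iff)
    then have "is_induced_cycle VF EF vs"
      using sub by (intro is_induced_cycle_transfer[OF c]) auto
    then show False using chordless len by blast
  next
    case True
    then obtain p q where pq: "p < ?n" "vs ! p = x" "q < ?n" "vs ! q = y"
      by (metis in_set_conv_nth)
    have closing: False
      if ab: "{a, b} = {x, y}" and ij: "i < ?n" "vs ! i = a" "vs ! j = b" "j = (i + 1) mod ?n" for a b i j
    proof -
      let ?ws = "rotate j vs"
      have "(j + (?n - 1)) mod ?n = i"
        using ij(1,4) by (cases "i + 1 < ?n") (auto simp: mod_if)
      moreover have "0 < ?n" "?n - 1 < ?n" using len by auto
      ultimately have ends: "?ws ! 0 = b" "?ws ! (length ?ws - 1) = a"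
        using ij by (simp_all add: nth_rotate)
      have "is_induced_cycle (VF - {v}) (insert {a, b} (edges_del EF v)) ?ws"
        using is_induced_cycle_rotate[OF c] ab by simp
      then have "is_induced_cycle VF EF (?ws @ [v])"
        using is_induced_cycle_append_vertex[OF _ g v _ _ ends] N nxy ab by simp
      then show False using chordless len by simp
    qed
    have "{vs ! p, vs ! q} \<in> ?E'" using pq by simp
    then have "cyclic_adj ?n p q" using c pq unfolding is_induced_cycle_iff by blast
    then show False
      unfolding cyclic_adj_def using closing[of x y p q] closing[of y x q p] pq
      by (auto simp: insert_commute)
  qed
qed

section \<open>Simplicial vertices of degree at most two\<close>

definition clique :: "'a set set \<Rightarrow> 'a set \<Rightarrow> bool" where
  "clique E S \<longleftrightarrow> (\<forall>a\<in>S. \<forall>b\<in>S. a \<noteq> b \<longrightarrow> {a, b} \<in> E)"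

definition simplicial_le2 :: "'a set set \<Rightarrow> 'a \<Rightarrow> bool" where
  "simplicial_le2 E w \<longleftrightarrow> card (nbhd E w) \<le> 2 \<and> clique E (nbhd E w)"

definition chordal_tw2 :: "'a set \<Rightarrow> 'a set set \<Rightarrow> bool" where
  "chordal_tw2 V E \<longleftrightarrow> is_graph V E \<and> chordal V E \<and>
     (\<exists>VT ET bag. is_tree_decomposition V E VT ET bag \<and> (\<forall>t\<in>VT. card (bag t) \<le> 3))"

text \<open>The strengthened induction hypothesis of Dirac's lemma, specialised to degree at most two.\<close>
definition small_clique_or_two_simplicial :: "'a set \<Rightarrow> 'a set set \<Rightarrow> bool" where
  "small_clique_or_two_simplicial V E \<longleftrightarrow> (card V \<le> 3 \<and> clique E V) \<or>
     (\<exists>a\<in>V. \<exists>b\<in>V. a \<noteq> b \<and> {a, b} \<notin> E \<and> simplicial_le2 E a \<and> simplicial_le2 E b)"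

lemma chordal_tw2_if_treewidth_le_2:
  assumes "is_graph V E" "chordal V E" "treewidth V E \<le> 2"
  shows "chordal_tw2 V E"
proof -
  obtain VT ET bag where "is_tree_decomposition V E VT ET bag" "\<forall>t\<in>VT. card (bag t) \<le> Suc 2"
    using treewidth_le_imp_bags[OF assms(1,3)] .
  then show ?thesis using assms(1,2) unfolding chordal_tw2_def by (auto simp: numeral_3_eq_3)
qed

lemma small_clique_or_two_simplicialI:
  "a \<in> V \<Longrightarrow> b \<in> V \<Longrightarrow> a \<noteq> b \<Longrightarrow> {a, b} \<notin> E \<Longrightarrow> simplicial_le2 E a \<Longrightarrow> simplicial_le2 E b \<Longrightarrow>
    small_clique_or_two_simplicial V E"
  unfolding small_clique_or_two_simplicial_def by blast

lemma small_clique_or_two_simplicialE: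
  assumes "small_clique_or_two_simplicial V E"
  obtains (clique) "card V \<le> 3" "clique E V"
    | (simplicial) a b where "a \<in> V" "b \<in> V" "a \<noteq> b" "{a, b} \<notin> E" "simplicial_le2 E a" "simplicial_le2 E b"
  using assms unfolding small_clique_or_two_simplicial_def by blast

lemma card_le_2_cases:
  assumes "finite N" "card N \<le> 2"
  obtains "N = {}" | x where "N = {x}" | x y where "x \<noteq> y" "N = {x, y}"
proof -
  consider "card N = 0" | "card N = 1" | "card N = 2" using assms(2) by linarith
  then show thesis
    using assms(1) that by cases (auto simp: card_1_singleton_iff card_2_iff)
qed

lemma clique_subset: "clique E S \<Longrightarrow> T \<subseteq> S \<Longrightarrow> clique E T"
  unfolding clique_def by blast

lemma simplicial_le2_if_small_clique:
  assumes g: "is_graph V E" and S: "S \<subseteq> V" "card S \<le> 3" "clique E S" and a: "a \<in> S" "nbhd E a \<subseteq> S"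
  shows "simplicial_le2 E a"
proof -
  have "finite S" using S(1) is_graph_finite[OF g] by (rule finite_subset)
  moreover have N: "nbhd E a \<subseteq> S - {a}" using a nbhd_irrefl[OF g] by blast
  ultimately have "card (nbhd E a) \<le> card (S - {a})" by (intro card_mono) auto
  also have "\<dots> \<le> 2" using S(2) a(1) \<open>finite S\<close> by simp
  finally show ?thesis
    unfolding simplicial_le2_def using clique_subset[OF S(3)] N by blast
qed

lemma chordal_tw2_edges_del:
  assumes "chordal_tw2 V E"
  shows "chordal_tw2 (V - {w}) (edges_del E w)"
proof -
  obtain VT ET bag where td: "is_tree_decomposition V E VT ET bag" and small: "\<forall>t\<in>VT. card (bag t) \<le> 3"
    using assms unfolding chordal_tw2_def by blast
  have edges: "\<forall>e\<in>E. \<exists>t\<in>VT. e \<subseteq> bag t"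
    using td unfolding is_tree_decomposition_def by simp
  then have "\<forall>e\<in>edges_del E w. \<exists>t\<in>VT. e \<subseteq> bag t - {w}" by blast
  then have "is_tree_decomposition (V - {w}) (edges_del E w) VT ET (\<lambda>t. bag t - {w})"
    by (rule tree_decomposition_delete_vertex[OF td])
  moreover have "\<forall>t\<in>VT. card (bag t - {w}) \<le> 3" using small by (rule card_bags_Diff_le)
  moreover have "is_graph (V - {w}) (edges_del E w)" "chordal (V - {w}) (edges_del E w)"
    using assms is_graph_edges_del chordal_edges_del unfolding chordal_tw2_def by auto
  ultimately show ?thesis unfolding chordal_tw2_def by blast
qed

lemma chordal_tw2_contract:
  assumes g: "is_graph V E" and ch: "chordal V E"
    and td: "is_tree_decomposition V E VT ET bag" and small: "\<forall>t\<in>VT. card (bag t) \<le> 3"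
    and t: "t \<in> VT" "nbhd E v \<subseteq> bag t"
    and v: "v \<in> V" and N: "nbhd E v = {x, y}" and xy: "x \<noteq> y" and nxy: "{x, y} \<notin> E"
  shows "chordal_tw2 (V - {v}) (insert {x, y} (edges_del E v))"
proof -
  have xyV: "x \<in> V - {v}" "y \<in> V - {v}" using N nbhd_subset[OF g] nbhd_irrefl[OF g] by blast+
  have "\<forall>e\<in>insert {x, y} (edges_del E v). \<exists>t\<in>VT. e \<subseteq> bag t - {v}"
  proof
    fix e assume "e \<in> insert {x, y} (edges_del E v)"
    then consider "e = {x, y}" | "e \<in> E" "v \<notin> e" by blast
    then show "\<exists>t\<in>VT. e \<subseteq> bag t - {v}"
    proof cases
      case 1
      then show ?thesis using t N xyV by blast
    next
      case 2
      moreover have "\<forall>e\<in>E. \<exists>t\<in>VT. e \<subseteq> bag t"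
        using td unfolding is_tree_decomposition_def by simp
      ultimately show ?thesis by blast
    qed
  qed
  then have "is_tree_decomposition (V - {v}) (insert {x, y} (edges_del E v)) VT ET (\<lambda>t. bag t - {v})"
    by (rule tree_decomposition_delete_vertex[OF td])
  moreover have "\<forall>t\<in>VT. card (bag t - {v}) \<le> 3" using small by (rule card_bags_Diff_le)
  moreover have "is_graph (V - {v}) (insert {x, y} (edges_del E v))"
    using is_graph_insert_edge[OF is_graph_edges_del[OF g] xyV xy] .
  ultimately show ?thesis
    using chordal_contract[OF g ch v N nxy] unfolding chordal_tw2_def by blast
qed

text \<open>Such a common neighbour \<open>z\<close> would make \<open>x z y v\<close> an induced 4-cycle.\<close>
lemma contract_no_common_nbr:
  assumes g: "is_graph V E" and ch: "chordal V E" and v: "v \<in> V"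
    and N: "nbhd E v = {x, y}" and xy: "x \<noteq> y" and nxy: "{x, y} \<notin> E"
    and z: "z \<in> V" "z \<noteq> v" and e: "{x, z} \<in> E" "{z, y} \<in> E"
  shows False
proof -
  have "x \<in> nbhd E v" "y \<in> nbhd E v" using N by simp_all
  then have vx: "{v, x} \<in> E" and yv: "{y, v} \<in> E"
    unfolding nbhd_def by (simp_all add: insert_commute)
  have "z \<noteq> x" "z \<noteq> y" using is_graph_edgeD(1)[OF g e(1)] is_graph_edgeD(1)[OF g e(2)] by auto
  then have "z \<notin> nbhd E v" using N by simp
  then have zv: "{z, v} \<notin> E" unfolding nbhd_def by (simp add: insert_commute)
  have "x \<noteq> v" "y \<noteq> v" "x \<in> V" "y \<in> V"
    using is_graph_edgeD[OF g vx] is_graph_edgeD[OF g yv] by auto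
  then have "distinct [x, z, y, v]" "{x, z, y, v} \<subseteq> V"
    using \<open>z \<noteq> x\<close> \<open>z \<noteq> y\<close> xy z v by auto
  from four_cycle_not_chordal[OF g this e yv vx nxy zv] have "\<not> chordal V E" .
  then show False using ch by contradiction
qed

lemma simplicial_le2_edges_del:
  assumes c: "c \<noteq> v" "c \<notin> nbhd E v" and s: "simplicial_le2 (edges_del E v) c"
  shows "simplicial_le2 E c"
proof -
  have "v \<notin> nbhd E c" using c(2) nbhd_sym by metis
  then have "nbhd (edges_del E v) c = nbhd E c" using c(1) unfolding nbhd_def by auto
  then show ?thesis using s unfolding simplicial_le2_def clique_def by auto
qed

lemma contract_endpoint_nbhd:
  assumes g: "is_graph V E" and ch: "chordal V E" and v: "v \<in> V"
    and N: "nbhd E v = {x, y}" and xy: "x \<noteq> y" and nxy: "{x, y} \<notin> E"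
    and s: "simplicial_le2 (insert {x, y} (edges_del E v)) x"
  shows "nbhd E x = {v}"
proof -
  let ?E' = "insert {x, y} (edges_del E v)"
  have "u = v" if u: "u \<in> nbhd E x" for u
  proof (rule ccontr)
    assume "u \<noteq> v"
    have xu: "{x, u} \<in> E" using u unfolding nbhd_def by simp
    have "x \<noteq> v" using N nbhd_irrefl[OF g] by blast
    then have "u \<in> nbhd ?E' x" "y \<in> nbhd ?E' x" using xu \<open>u \<noteq> v\<close> unfolding nbhd_def by simp_all
    moreover have "u \<noteq> y" using xu nxy by blast
    ultimately have "{u, y} \<in> ?E'" using s unfolding simplicial_le2_def clique_def by blast
    moreover have "u \<noteq> x" using is_graph_edgeD(1)[OF g xu] by simp
    ultimately have "{u, y} \<in> E" using \<open>u \<noteq> y\<close> by (auto simp: doubleton_eq_iff)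
    then show False
      using contract_no_common_nbr[OF g ch v N xy nxy _ \<open>u \<noteq> v\<close> xu] is_graph_edgeD(3)[OF g xu] by blast
  qed
  moreover have "v \<in> nbhd E x" using N nbhd_sym[of x E v] by simp
  ultimately show ?thesis by blast
qed

text \<open>Without common neighbours of \<open>x\<close> and \<open>y\<close> besides \<open>v\<close>, the endpoints \<open>x, y\<close> are simplicial after
  the contraction only if \<open>v\<close> is their only neighbour, and the other vertices keep their
  neighbourhoods.\<close>
lemma simplicial_le2_contract:
  assumes g: "is_graph V E" and ch: "chordal V E" and v: "v \<in> V"
    and N: "nbhd E v = {x, y}" and xy: "x \<noteq> y" and nxy: "{x, y} \<notin> E"
    and c: "c \<in> V" "c \<noteq> v" and s: "simplicial_le2 (insert {x, y} (edges_del E v)) c"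
  shows "simplicial_le2 E c"
proof -
  let ?E' = "insert {x, y} (edges_del E v)"
  have singleton: "simplicial_le2 E c" if "nbhd E c = {v}"
    using that unfolding simplicial_le2_def clique_def by simp
  consider "c = x" | "c = y" | "c \<notin> {x, y}" by blast
  then show ?thesis
  proof cases
    case 1
    then show ?thesis using contract_endpoint_nbhd[OF g ch v N xy nxy] s singleton by simp
  next
    case 2
    have "nbhd E v = {y, x}" "{y, x} \<notin> E" "?E' = insert {y, x} (edges_del E v)"
      using N nxy by (simp_all add: insert_commute)
    then show ?thesis using contract_endpoint_nbhd[OF g ch v, of y x] xy s singleton 2 by simp
  next
    case 3
    then have "c \<notin> nbhd E v" using N by simp
    then have "v \<notin> nbhd E c" using nbhd_sym by metis
    moreover have "{c, u} \<noteq> {x, y}" for u using 3 by (auto simp: doubleton_eq_iff)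
    ultimately have same: "nbhd ?E' c = nbhd E c" using c(2) unfolding nbhd_def by auto
    have "{p, q} \<in> E" if pq: "p \<in> nbhd E c" "q \<in> nbhd E c" "p \<noteq> q" for p q
    proof -
      have "{p, q} \<in> ?E'" using s pq same unfolding simplicial_le2_def clique_def by blast
      moreover have "{p, q} \<noteq> {x, y}"
      proof
        assume "{p, q} = {x, y}"
        then have "x \<in> nbhd E c" "y \<in> nbhd E c" using pq(1,2) by (auto simp: doubleton_eq_iff)
        then have "{x, c} \<in> E" "{c, y} \<in> E" unfolding nbhd_def by (simp_all add: insert_commute)
        then show False using contract_no_common_nbr[OF g ch v N xy nxy c] by blast
      qed
      ultimately show ?thesis by simp
    qed
    then show ?thesis using s same unfolding simplicial_le2_def clique_def by simp
  qed
qed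

lemma clique_insert_nbhd:
  assumes g: "is_graph V E" and v: "v \<in> V" "card (nbhd E v) \<le> 2"
    and rest: "V - {v} \<subseteq> nbhd E v" "clique E (V - {v})"
  shows "card V \<le> 3" "clique E V"
proof -
  have "V \<subseteq> insert v (nbhd E v)" using rest(1) by blast
  then have "card V \<le> card (insert v (nbhd E v))" by (rule card_mono[rotated]) (simp add: finite_nbhd[OF g])
  also have "\<dots> \<le> Suc (card (nbhd E v))" by (simp add: card_insert_if finite_nbhd[OF g])
  finally show "card V \<le> 3" using v(2) by linarith
  show "clique E V"
    unfolding clique_def
  proof (intro ballI impI)
    fix a b assume ab: "a \<in> V" "b \<in> V" "a \<noteq> b"
    consider "a = v" | "b = v" | "a \<noteq> v" "b \<noteq> v" by blast
    then show "{a, b} \<in> E"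
    proof cases
      case 1
      then have "b \<in> nbhd E v" using rest(1) ab by blast
      then show ?thesis using 1 unfolding nbhd_def by simp
    next
      case 2
      then have "a \<in> nbhd E v" using rest(1) ab by blast
      then show ?thesis using 2 unfolding nbhd_def by (simp add: insert_commute)
    next
      case 3
      then show ?thesis using rest(2) ab unfolding clique_def by blast
    qed
  qed
qed

lemma small_clique_or_two_simplicial_remove:
  assumes g: "is_graph V E" and v: "v \<in> V" "simplicial_le2 E v"
    and IH: "small_clique_or_two_simplicial (V - {v}) (edges_del E v)"
  shows "small_clique_or_two_simplicial V E"
proof -
  have v_clique: "clique E (nbhd E v)" and v_card: "card (nbhd E v) \<le> 2"
    using v(2) unfolding simplicial_le2_def by auto
  have with_v: "small_clique_or_two_simplicial V E"
    if "a \<in> V - {v}" "a \<notin> nbhd E v" "simplicial_le2 E a" for a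
  proof (rule small_clique_or_two_simplicialI[OF v(1) _ _ _ v(2) that(3)])
    show "a \<in> V" "v \<noteq> a" using that(1) by auto
    show "{v, a} \<notin> E" using that(2) unfolding nbhd_def by simp
  qed
  from IH show ?thesis
  proof (cases rule: small_clique_or_two_simplicialE)
    case clique
    have rest_clique: "clique E (V - {v})" using clique(2) unfolding clique_def by blast
    show ?thesis
    proof (cases "V - {v} \<subseteq> nbhd E v")
      case True
      then show ?thesis using clique_insert_nbhd[OF g v(1) v_card True rest_clique]
        unfolding small_clique_or_two_simplicial_def by blast
    next
      case False
      then obtain a where a: "a \<in> V - {v}" "a \<notin> nbhd E v" by blast
      then have "v \<notin> nbhd E a" using nbhd_sym by metis
      then have "nbhd E a \<subseteq> V - {v}" using nbhd_subset[OF g] by blast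
      then have "simplicial_le2 E a"
        using simplicial_le2_if_small_clique[OF g _ clique(1) rest_clique a(1)] by blast
      then show ?thesis using with_v a by blast
    qed
  next
    case (simplicial a b)
    have "{a, b} \<notin> E" using simplicial(1,2,4) by auto
    then have "a \<notin> nbhd E v \<or> b \<notin> nbhd E v" using v_clique simplicial(3) unfolding clique_def by blast
    then obtain c where c: "c \<in> V - {v}" "c \<notin> nbhd E v" "simplicial_le2 (edges_del E v) c"
      using simplicial(1,2,5,6) by metis
    have "simplicial_le2 E c" using simplicial_le2_edges_del[of c v E] c by blast
    then show ?thesis using with_v c by blast
  qed
qed

lemma small_clique_or_two_simplicial_contract:
  assumes g: "is_graph V E" and ch: "chordal V E" and v: "v \<in> V"
    and N: "nbhd E v = {x, y}" and xy: "x \<noteq> y" and nxy: "{x, y} \<notin> E"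
    and IH: "small_clique_or_two_simplicial (V - {v}) (insert {x, y} (edges_del E v))"
  shows "small_clique_or_two_simplicial V E"
proof -
  let ?E' = "insert {x, y} (edges_del E v)"
  have xyV: "x \<in> V - {v}" "y \<in> V - {v}" using N nbhd_subset[OF g] nbhd_irrefl[OF g] by blast+
  have g': "is_graph (V - {v}) ?E'"
    using is_graph_insert_edge[OF is_graph_edges_del[OF g] xyV xy] .
  have lift: "simplicial_le2 E c" if "c \<in> V - {v}" "simplicial_le2 ?E' c" for c
    using simplicial_le2_contract[OF g ch v N xy nxy] that by blast
  from IH show ?thesis
  proof (cases rule: small_clique_or_two_simplicialE)
    case clique
    have "simplicial_le2 ?E' c" if "c \<in> V - {v}" for c
      using simplicial_le2_if_small_clique[OF g' order_refl clique that nbhd_subset[OF g']] .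
    then have "simplicial_le2 E x" "simplicial_le2 E y" using lift xyV by blast+
    then show ?thesis using xyV xy nxy by (intro small_clique_or_two_simplicialI[of x _ y]) auto
  next
    case (simplicial a b)
    then have "{a, b} \<notin> E" by auto
    then show ?thesis
      using simplicial lift by (intro small_clique_or_two_simplicialI[of a _ b]) auto
  qed
qed

text \<open>Dirac's argument: a vertex of a leaf bag has at most two neighbours; if they are not adjacent,
  contract it to an edge.\<close>
lemma chordal_tw2_small_clique_or_two_simplicial:
  assumes "chordal_tw2 V E" "V \<noteq> {}"
  shows "small_clique_or_two_simplicial V E"
  using assms
proof (induction "card V" arbitrary: V E rule: less_induct)
  case less
  obtain VT ET bag where g: "is_graph V E" and ch: "chordal V E"
    and td: "is_tree_decomposition V E VT ET bag" and small: "\<forall>t\<in>VT. card (bag t) \<le> 3"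
    using less.prems(1) unfolding chordal_tw2_def by blast
  obtain v t where v: "v \<in> V" and t: "t \<in> VT" "v \<in> bag t" "nbhd E v \<subseteq> bag t"
    using exists_vertex_nbhd_in_bag[OF td g less.prems(2)] by blast
  have "finite (bag t)"
    using td t(1) is_graph_finite[OF g] unfolding is_tree_decomposition_def by (meson finite_subset)
  moreover have "nbhd E v \<subseteq> bag t - {v}" using t(3) nbhd_irrefl[OF g] by blast
  ultimately have "card (nbhd E v) \<le> card (bag t) - 1"
    using card_mono[of "bag t - {v}" "nbhd E v"] t(2) by simp
  then have card_N: "card (nbhd E v) \<le> 2" using small t(1) by force
  have smaller: "card (V - {v}) < card V"
    using card_Diff1_less[OF is_graph_finite[OF g] v] .
  show ?case
  proof (cases "simplicial_le2 E v")
    case True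
    show ?thesis
    proof (cases "V - {v} = {}")
      case True
      then have "V = {v}" using v by blast
      then show ?thesis unfolding small_clique_or_two_simplicial_def clique_def by simp
    next
      case False
      from less.hyps[OF smaller chordal_tw2_edges_del[OF less.prems(1)] False]
      show ?thesis by (rule small_clique_or_two_simplicial_remove[OF g v True])
    qed
  next
    case False
    then have "\<not> clique E (nbhd E v)" using card_N unfolding simplicial_le2_def by blast
    then obtain x y where xy: "x \<in> nbhd E v" "y \<in> nbhd E v" "x \<noteq> y" and nxy: "{x, y} \<notin> E"
      unfolding clique_def by blast
    have N: "nbhd E v = {x, y}"
      using card_seteq[OF finite_nbhd[OF g], of "{x, y}"] xy card_N by simp
    have contracted: "chordal_tw2 (V - {v}) (insert {x, y} (edges_del E v))"
      using chordal_tw2_contract[OF g ch td small t(1,3) v N xy(3) nxy] .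
    moreover have "V - {v} \<noteq> {}" using xy(1) nbhd_subset[OF g] nbhd_irrefl[OF g] by blast
    ultimately have "small_clique_or_two_simplicial (V - {v}) (insert {x, y} (edges_del E v))"
      by (rule less.hyps[OF smaller])
    then show ?thesis by (rule small_clique_or_two_simplicial_contract[OF g ch v N xy(3) nxy])
  qed
qed

lemma chordal_tw2_has_simplicial:
  assumes "chordal_tw2 V E" "V \<noteq> {}"
  shows "\<exists>w\<in>V. simplicial_le2 E w"
  using chordal_tw2_small_clique_or_two_simplicial[OF assms]
proof (cases rule: small_clique_or_two_simplicialE)
  case clique
  have g: "is_graph V E" using assms(1) unfolding chordal_tw2_def by blast
  obtain a where "a \<in> V" using assms(2) by blast
  then show ?thesis
    using simplicial_le2_if_small_clique[OF g order_refl clique _ nbhd_subset[OF g]] by blast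
qed blast

lemma weighted_hom_count_eq_if_eb_multiset_eq:
  fixes V :: "'a set" and V' :: "'b set" and VF :: "'c set"
  assumes G: "is_graph V E" "no_isolated V E" and G': "is_graph V' E'" "no_isolated V' E'"
    and eb: "\<And>l. eb_multiset l E = eb_multiset l E'" and F: "chordal_tw2 VF EF"
  shows "weighted_hom_count l V E VF EF \<alpha> \<beta> = weighted_hom_count l V' E' VF EF \<alpha> \<beta>"
  using F
proof (induction "card VF" arbitrary: VF EF l \<alpha> \<beta> rule: less_induct)
  case less
  have gF: "is_graph VF EF" using less.prems unfolding chordal_tw2_def by blast
  show ?case
  proof (cases "VF = {}")
    case True
    then show ?thesis
      using gF weighted_hom_count_empty[of EF l V E] weighted_hom_count_empty[of EF l V' E'] by simp
  next
    case False
    obtain w where w: "w \<in> VF" "simplicial_le2 EF w"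
      using chordal_tw2_has_simplicial[OF less.prems False] by blast
    have IH: "weighted_hom_count l V E (VF - {w}) (edges_del EF w) \<alpha> \<beta> =
        weighted_hom_count l V' E' (VF - {w}) (edges_del EF w) \<alpha> \<beta>" for l \<alpha> \<beta>
      using less.hyps[OF card_Diff1_less[OF is_graph_finite[OF gF] w(1)] chordal_tw2_edges_del[OF less.prems]] .
    have "card (nbhd EF w) \<le> 2" using w(2) unfolding simplicial_le2_def by simp
    with finite_nbhd[OF gF] consider
        "nbhd EF w = {}" | x where "nbhd EF w = {x}" | x y where "x \<noteq> y" "nbhd EF w = {x, y}"
      by (rule card_le_2_cases)
    then show ?thesis
    proof cases
      case 1
      have "(\<Sum>z\<in>V. \<alpha> w (vertex_color l E z)) = (\<Sum>z\<in>V'. \<alpha> w (vertex_color l E' z))"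
        using sum_vertex_color_eq[OF G G' eb] .
      then show ?thesis
        unfolding weighted_hom_count_remove_isolated[OF gF w(1) G(1) 1]
          weighted_hom_count_remove_isolated[OF gF w(1) G'(1) 1] IH by simp
    next
      case (2 x)
      show ?thesis
        unfolding weighted_hom_count_remove_leaf[OF gF w(1) G(1) 2]
          weighted_hom_count_remove_leaf[OF gF w(1) G'(1) 2] IH ..
    next
      case (3 x y)
      have "{x, y} \<in> EF" using w(2) 3 unfolding simplicial_le2_def clique_def by auto
      show ?thesis
        unfolding weighted_hom_count_remove_simplicial[OF gF w(1) G(1) 3(2) 3(1) \<open>{x, y} \<in> EF\<close>]
          weighted_hom_count_remove_simplicial[OF gF w(1) G'(1) 3(2) 3(1) \<open>{x, y} \<in> EF\<close>] IH ..
    qed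
  qed
qed

theorem mainTheorem8:
  fixes V :: "'a set" and E :: "'a set set"
    and V' :: "'b set" and E' :: "'b set set"
    and VF :: "'c set" and EF :: "'c set set"
  assumes "is_graph V E" and "no_isolated V E"
    and "is_graph V' E'" and "no_isolated V' E'"
    and "is_graph VF EF" and "chordal VF EF" and "treewidth VF EF \<le> 2"
    and "hom_count VF EF V E \<noteq> hom_count VF EF V' E'"
  shows "eb_distinguishable V E V' E'"
proof (rule ccontr)
  assume "\<not> eb_distinguishable V E V' E'"
  then have eb: "eb_multiset l E = eb_multiset l E'" for l
    unfolding eb_distinguishable_def by simp
  have "chordal_tw2 VF EF" using chordal_tw2_if_treewidth_le_2 assms(5-7) .
  then have "weighted_hom_count 0 V E VF EF (\<lambda>_ _. 1) (\<lambda>_ _ _. 1) =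
      weighted_hom_count 0 V' E' VF EF (\<lambda>_ _. 1) (\<lambda>_ _ _. 1)"
    by (rule weighted_hom_count_eq_if_eb_multiset_eq[OF assms(1-4) eb])
  then show False using assms(8) by (simp add: hom_count_eq_weighted_hom_count[where l = 0])
qed

end
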